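(* For every $m\geq0$ the vector $c_{2m+1}\cdot v$ is a scalar multiple $\gamma_m v$ of $v$, and as formal power series in $z$, $$\sum_{m=0}^\infty \gamma_m\, z^{m}=\frac{1}{z}\left(1-\prod_{i=1}^N\frac{1-z\,\lambda_i(\lambda_i+1)}{1-z\,\lambda_i(\lambda_i-1)}\right).$$ Equivalently, $\sum_{m\ge0}\gamma_m u^{-2m-1}=u\Big(1-\prod_{i=1}^N\frac{u^2-\lambda_i(\lambda_i+1)}{u^2-\lambda_i(\lambda_i-1)}\Big)$ as formal Laurent series in $u^{-1}$.
   Context: Let $N\geq1$, $I=\{-N,\dots,-1,1,\dots,N\}$, and for $k\in I$ put $\bar k=0$ if $k>0$, $\bar k=1$ if $k<0$. The Lie superalgebra $\mathfrak{q}(N)$ over $\mathbb{C}$ is spanned by elements $F_{ij}$ ($i,j\in I$) with $F_{-i,-j}=F_{ij}$ (realized as $F_{ij}=E_{ij}+E_{-i,-j}\in\mathfrak{gl}(N|N)$), $F_{ij}$ of parity $\bar\imath+\bar\jmath\bmod 2$, and supercommutator $$[F_{ij}, F_{kl}] = \delta_{kj} F_{il} - (-1)^{(\bar{\imath}+ \bar{\jmath})(\bar{k} + \bar{l})} \delta_{il} F_{kj} + \delta_{k,-j} F_{-i,l} - (-1)^{(\bar{\imath} + \bar{\jmath})(\bar{k} + \bar{l})} \delta_{-i,l} F_{k,-j}.$$ For $n\geq1$ define $C^{(n)}_{ij}\in U(\mathfrak{q}(N))$ by $$C^{(n)}_{ij} = \sum_{k_1,\ldots,k_{n-1}\in I}F_{ik_1}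 (-1)^{\bar{k}_1} F_{k_1k_2} (-1)^{\bar{k}_2} \cdots F_{k_{n-2}k_{n-1}} (-1)^{\bar{k}_{n-1}} F_{k_{n-1}j}$$ (so $C^{(1)}_{ij}=F_{ij}$), and the Casimir element $c_n=\sum_{i\in I}C^{(n)}_{ii}$. Let $V$ be a representation of $\mathfrak{q}(N)$ and $v\in V$ a vector such that $F_{ij}\cdot v=0$ whenever $|i|<|j|$, and $F_{ii}\cdot v=\lambda_i v$ for $i=1,\dots,N$, where $\lambda_1,\dots,\lambda_N\in\mathbb{C}$. *)

theory Defs
  imports Main "HOL-Computational_Algebra.Formal_Power_Series"
begin

definition idx :: "nat \<Rightarrow> int set" where
  "idx N = {- int N .. -1} \<union> {1 .. int N}"

definition par :: "int \<Rightarrow> nat" where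
  "par k = (if k < 0 then 1 else 0)"

text \<open>A representation of q(N) on a complex vector space (carrier type 'v, scalar
  multiplication sc): operators F i j (i,j in I), each linear, with F(-i,-j) = F(i,j),
  satisfying the supercommutator relations, i.e. a module over U(q(N)).\<close>
definition is_qrep :: "nat \<Rightarrow> (complex \<Rightarrow> 'v::ab_group_add \<Rightarrow> 'v) \<Rightarrow> (int \<Rightarrow> int \<Rightarrow> 'v \<Rightarrow> 'v) \<Rightarrow> bool" where
  "is_qrep N sc F \<longleftrightarrow>
     vector_space sc \<and>
     (\<forall>i\<in>idx N. \<forall>j\<in>idx N. Vector_Spaces.linear sc sc (F i j)) \<and>
     (\<forall>i\<in>idx N. \<forall>j\<in>idx N. F (-i) (-j) = F i j) \<and>
     (\<forall>i\<in>idx N. \<forall>j\<in>idx N. \<forall>k\<in>idx N. \<forall>l\<in>idx N. \<forall>x.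
        (let s = (-1::complex) ^ ((par i + par j) * (par k + par l)) in
          F i j (F k l x) - sc s (F k l (F i j x)) =
            (if k = j then F i l x else 0)
            - sc s (if i = l then F k j x else 0)
            + (if k = - j then F (- i) l x else 0)
            - sc s (if - i = l then F k (- j) x else 0)))"

text \<open>Action of C^(n)_{ij} on a vector:
  C^(1)_{ij} = F_{ij},  C^(n+1)_{ij} = sum_k F_{ik} (-1)^{bar k} C^(n)_{kj}.
  (The value for n = 0 is an irrelevant convention.)\<close>
fun Cop :: "nat \<Rightarrow> (complex \<Rightarrow> 'v::ab_group_add \<Rightarrow> 'v) \<Rightarrow> (int \<Rightarrow> int \<Rightarrow> 'v \<Rightarrow> 'v) \<Rightarrow> nat \<Rightarrow> int \<Rightarrow> int \<Rightarrow> 'v \<Rightarrow> 'v" where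
  "Cop N sc F 0 i j x = 0"
| "Cop N sc F (Suc 0) i j x = F i j x"
| "Cop N sc F (Suc (Suc n)) i j x =
     (\<Sum>k\<in>idx N. F i k (sc ((-1::complex) ^ par k) (Cop N sc F (Suc n) k j x)))"

definition casimir :: "nat \<Rightarrow> (complex \<Rightarrow> 'v::ab_group_add \<Rightarrow> 'v) \<Rightarrow> (int \<Rightarrow> int \<Rightarrow> 'v \<Rightarrow> 'v) \<Rightarrow> nat \<Rightarrow> 'v \<Rightarrow> 'v" where
  "casimir N sc F n x = (\<Sum>i\<in>idx N. Cop N sc F n i i x)"

end

theory Submission
  imports Defs
begin

text \<open>
  The matrices C^(n) arise from F by matrix multiplication, so they transform under the
  adjoint action of q(N) exactly like F itself. On the highest weight vector v this kills
  C^(n)_ij v for |i| < |j| and expresses C^(n+1)_ii v and C^(n+1)_{-i,i} v through the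
  vectors C^(n)_kk v, C^(n)_{-k,k} v with |k| >= |i|. By induction on m,
  C^(2m+1)_jj v = lam_|j| beta_m(|j|) v and C^(2m+1)_{-j,j} v = beta_m(|j|) F_{-j,j} v, while
  C^(2m+2)_jj v = +-beta_{m+1}(|j|) v and C^(2m+2)_{-j,j} v = 0, where beta satisfies a
  recurrence that is triangular in p = |j|. For the generating functions G_p of beta_m(p)
  it reads G_p (1 - lam_p (lam_p - 1) z) = 1 - 2 z sum_{q>p} lam_q G_q, and downward
  induction on p telescopes this into the product.
\<close>

lemma idx_iff: "k \<in> idx N \<longleftrightarrow> k \<noteq> 0 \<and> \<bar>k\<bar> \<le> int N"
  unfolding idx_def by auto

lemma minus_in_idx: "k \<in> idx N \<Longrightarrow> -k \<in> idx N"
  by (auto simp: idx_iff)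

lemma finite_idx [simp]: "finite (idx N)"
  by (simp add: idx_def)

lemma sum_idx_split:
  assumes "i \<in> idx N"
  shows "(\<Sum>k\<in>idx N. f k) = f i + f (-i) + (\<Sum>k\<in>{k\<in>idx N. \<bar>k\<bar> < \<bar>i\<bar>}. f k)
           + (\<Sum>k\<in>{k\<in>idx N. \<bar>i\<bar> < \<bar>k\<bar>}. f k)"
proof -
  have i: "i \<noteq> 0" "-i \<in> idx N" using assms by (auto simp: idx_iff)
  have "idx N = {i, -i} \<union> ({k\<in>idx N. \<bar>k\<bar> < \<bar>i\<bar>} \<union> {k\<in>idx N. \<bar>i\<bar> < \<bar>k\<bar>})"
    using assms i by auto
  also have "(\<Sum>k\<in>\<dots>. f k) = (\<Sum>k\<in>{i, -i}. f k)
      + ((\<Sum>k\<in>{k\<in>idx N. \<bar>k\<bar> < \<bar>i\<bar>}. f k) + (\<Sum>k\<in>{k\<in>idx N. \<bar>i\<bar> < \<bar>k\<bar>}. f k))"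
    by (subst sum.union_disjoint, auto, subst sum.union_disjoint, auto)
  finally show ?thesis using i by (simp add: add.assoc)
qed

lemma sum_idx_abs_greater:
  assumes "p \<ge> 0"
  shows "(\<Sum>k\<in>{k\<in>idx N. p < \<bar>k\<bar>}. f k) = (\<Sum>q\<in>{p<..int N}. f q + f (-q))"
proof -
  have "{k\<in>idx N. p < \<bar>k\<bar>} = {p<..int N} \<union> uminus ` {p<..int N}"
  proof (rule set_eqI, rule iffI)
    fix k assume "k \<in> {k\<in>idx N. p < \<bar>k\<bar>}"
    thus "k \<in> {p<..int N} \<union> uminus ` {p<..int N}"
      using assms by (cases "k > 0") (auto simp: idx_iff image_iff intro!: bexI[of _ "-k"])
  qed (use assms in \<open>auto simp: idx_iff\<close>)
  hence "(\<Sum>k\<in>{k\<in>idx N. p < \<bar>k\<bar>}. f k) = (\<Sum>k\<in>{p<..int N} \<union> uminus ` {p<..int N}. f k)"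
    by simp
  also have "\<dots> = (\<Sum>k\<in>{p<..int N}. f k) + (\<Sum>k\<in>uminus ` {p<..int N}. f k)"
    by (rule sum.union_disjoint) (use assms in auto)
  also have "(\<Sum>k\<in>uminus ` {p<..int N}. f k) = (\<Sum>q\<in>{p<..int N}. f (-q))"
    by (subst sum.reindex) (auto simp: inj_on_def)
  finally show ?thesis by (simp add: sum.distrib)
qed

abbreviation psign :: "int \<Rightarrow> complex" where
  "psign k \<equiv> (-1) ^ par k"

lemma psign_mult_self: "psign k * (psign k * x) = x"
  unfolding par_def by simp

lemma psign_minus: "k \<noteq> 0 \<Longrightarrow> psign (-k) = - psign k"
  unfolding par_def by auto

definition supersign :: "int \<Rightarrow> int \<Rightarrow> int \<Rightarrow> int \<Rightarrow> complex" where
  "supersign i j k l = (-1) ^ ((par i + par j) * (par k + par l))"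

lemma supersign_mult: "supersign a b i k * supersign a b k j = supersign a b i j"
  unfolding supersign_def par_def by (simp split: if_splits)

lemma supersign_mult_psign: "supersign a b i a * psign a = supersign a b i b * psign b"
  unfolding supersign_def par_def by (simp split: if_splits)

lemma supersign_minus_mult_psign:
  "a \<noteq> 0 \<Longrightarrow> b \<noteq> 0 \<Longrightarrow> supersign a b i (-a) * psign (-a) = supersign a b i (-b) * psign (-b)"
  unfolding supersign_def par_def by (auto split: if_splits)

lemma supersign_swap: "supersign i k k i = psign i * psign k"
  unfolding supersign_def par_def by auto

lemma supersign_minus_swap: "i \<noteq> 0 \<Longrightarrow> supersign (-i) k k i = 1"
  unfolding supersign_def par_def by auto

locale qrep = module sc for sc :: "complex \<Rightarrow> 'v::ab_group_add \<Rightarrow> 'v" +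
  fixes N :: nat and F :: "int \<Rightarrow> int \<Rightarrow> 'v \<Rightarrow> 'v"
  assumes F_add: "i \<in> idx N \<Longrightarrow> j \<in> idx N \<Longrightarrow> F i j (x + y) = F i j x + F i j y"
    and F_scale: "i \<in> idx N \<Longrightarrow> j \<in> idx N \<Longrightarrow> F i j (sc c x) = sc c (F i j x)"
    and F_minus_minus: "i \<in> idx N \<Longrightarrow> j \<in> idx N \<Longrightarrow> F (-i) (-j) = F i j"
    and F_supercommutator: "i \<in> idx N \<Longrightarrow> j \<in> idx N \<Longrightarrow> k \<in> idx N \<Longrightarrow> l \<in> idx N \<Longrightarrow>
      F i j (F k l x) - sc (supersign i j k l) (F k l (F i j x)) =
        (if k = j then F i l x else 0) - sc (supersign i j k l) (if i = l then F k j x else 0)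
        + (if k = -j then F (-i) l x else 0) - sc (supersign i j k l) (if -i = l then F k (-j) x else 0)"

lemma qrep_if_is_qrep:
  assumes "is_qrep N sc F"
  shows "qrep sc N F"
proof -
  have "vector_space sc" and lin: "\<And>i j. i \<in> idx N \<Longrightarrow> j \<in> idx N \<Longrightarrow> Vector_Spaces.linear sc sc (F i j)"
    using assms unfolding is_qrep_def by blast+
  then interpret module sc by (simp add: module_iff_vector_space)
  show ?thesis
    by unfold_locales
      (use assms lin in \<open>auto simp: is_qrep_def Let_def supersign_def Vector_Spaces.linear_iff\<close>)
qed

context qrep
begin

abbreviation C where "C \<equiv> Cop N sc F"

lemma F_zero: "i \<in> idx N \<Longrightarrow> j \<in> idx N \<Longrightarrow> F i j 0 = 0"
  using F_scale[of i j 0 0] by simp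

lemma F_diff: "i \<in> idx N \<Longrightarrow> j \<in> idx N \<Longrightarrow> F i j (x - y) = F i j x - F i j y"
  using F_add[of i j "x - y" y] by (simp add: algebra_simps)

lemma F_minus: "i \<in> idx N \<Longrightarrow> j \<in> idx N \<Longrightarrow> F i j (- x) = - F i j x"
  using F_diff[of i j 0 x] by (simp add: F_zero)

lemma F_sum: "i \<in> idx N \<Longrightarrow> j \<in> idx N \<Longrightarrow> F i j (sum g A) = (\<Sum>a\<in>A. F i j (g a))"
  by (induct A rule: infinite_finite_induct) (simp_all add: F_zero F_add)

lemma scale_if_zero: "sc c (if P then x else 0) = (if P then sc c x else 0)"
  by simp

lemma F_swap_minus: "i \<in> idx N \<Longrightarrow> F i (-i) = F (-i) i"
  using F_minus_minus[of "-i" i] minus_in_idx by auto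

lemma double_cancel: "y + y = z + z \<Longrightarrow> y = (z::'v)"
proof -
  assume "y + y = z + z"
  hence "sc 2 y = sc 2 z" using scale_left_distrib[of 1 1 y] scale_left_distrib[of 1 1 z] by simp
  hence "sc (1/2) (sc 2 y) = sc (1/2) (sc 2 z)" by simp
  thus ?thesis by simp
qed

lemma F_odd_diag_square: "i \<in> idx N \<Longrightarrow> F (-i) i (F (-i) i x) = F i i x"
proof -
  assume i: "i \<in> idx N"
  hence "-i \<in> idx N" "i \<noteq> 0" "supersign (-i) i (-i) i = -1"
    by (auto simp: minus_in_idx idx_iff supersign_def par_def)
  hence "F (-i) i (F (-i) i x) + F (-i) i (F (-i) i x) = F i i x + F i i x"
    using F_supercommutator[of "-i" i "-i" i x] i F_minus_minus[of i i] by (simp add: algebra_simps)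
  thus ?thesis by (rule double_cancel)
qed

lemma F_diag_commute_odd_diag: "i \<in> idx N \<Longrightarrow> F i i (F (-i) i x) = F (-i) i (F i i x)"
proof -
  assume i: "i \<in> idx N"
  hence "-i \<in> idx N" "i \<noteq> 0" "supersign i i (-i) i = 1"
    by (auto simp: minus_in_idx idx_iff supersign_def par_def)
  thus ?thesis using F_supercommutator[of i i "-i" i x] i by (simp add: algebra_simps)
qed

definition ad_equivariant :: "(int \<Rightarrow> int \<Rightarrow> 'v \<Rightarrow> 'v) \<Rightarrow> bool" where
  "ad_equivariant X \<longleftrightarrow> (\<forall>a\<in>idx N. \<forall>b\<in>idx N. \<forall>i\<in>idx N. \<forall>j\<in>idx N. \<forall>x.
     F a b (X i j x) - sc (supersign a b i j) (X i j (F a b x)) =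
       (if i = b then X a j x else 0) - sc (supersign a b i j) (if a = j then X i b x else 0)
       + (if i = -b then X (-a) j x else 0) - sc (supersign a b i j) (if -a = j then X i (-b) x else 0))"

definition F_mult :: "(int \<Rightarrow> int \<Rightarrow> 'v \<Rightarrow> 'v) \<Rightarrow> int \<Rightarrow> int \<Rightarrow> 'v \<Rightarrow> 'v" where
  "F_mult X i j x = (\<Sum>k\<in>idx N. F i k (sc (psign k) (X k j x)))"

lemma Cop_Suc_Suc: "C (Suc (Suc n)) = F_mult (C (Suc n))"
  by (simp add: fun_eq_iff F_mult_def)

lemma ad_equivariant_F: "ad_equivariant F"
  unfolding ad_equivariant_def using F_supercommutator by blast

text \<open>Super Leibniz rule for the supercommutator with F_ab on one summand of F_mult X.\<close>

lemma F_mult_summand_commutator: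
  fixes x :: 'v
  assumes X: "ad_equivariant X" and idx: "a \<in> idx N" "b \<in> idx N" "i \<in> idx N" "j \<in> idx N" "k \<in> idx N"
  defines "D \<equiv> sc (psign k) (X k j x)"
  shows "F a b (F i k D) - sc (supersign a b i j) (F i k (sc (psign k) (X k j (F a b x)))) =
     (if i = b then F a k D else 0) - sc (supersign a b i k) (if a = k then F i b D else 0)
   + (if i = -b then F (-a) k D else 0) - sc (supersign a b i k) (if -a = k then F i (-b) D else 0)
   + sc (supersign a b i k) (F i k (sc (psign k) ((if k = b then X a j x else 0) + (if k = -b then X (-a) j x else 0))))
   - sc (supersign a b i j) (if a = j then F i k (sc (psign k) (X k b x)) else 0)
   - sc (supersign a b i j) (if -a = j then F i k (sc (psign k) (X k (-b) x)) else 0)"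
proof -
  define \<sigma> where "\<sigma> = supersign a b i j"
  have outer: "F a b (F i k D) = sc (supersign a b i k) (F i k (F a b D)) +
      ((if i = b then F a k D else 0) - sc (supersign a b i k) (if a = k then F i b D else 0)
       + (if i = -b then F (-a) k D else 0) - sc (supersign a b i k) (if -a = k then F i (-b) D else 0))"
    using F_supercommutator[of a b i k D] idx by (simp add: algebra_simps)
  have inner: "F a b (X k j x) = sc (supersign a b k j) (X k j (F a b x)) +
      ((if k = b then X a j x else 0) - sc (supersign a b k j) (if a = j then X k b x else 0)
       + (if k = -b then X (-a) j x else 0) - sc (supersign a b k j) (if -a = j then X k (-b) x else 0))"
    using X idx unfolding ad_equivariant_def by (simp add: algebra_simps)
  have sign: "supersign a b i k * (psign k * supersign a b k j) = \<sigma> * psign k"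
    using supersign_mult[of a b i k j] unfolding \<sigma>_def by (simp add: algebra_simps)
  have "F i k (F a b D) = sc (psign k) (sc (supersign a b k j) (F i k (X k j (F a b x))))
      + F i k (sc (psign k) ((if k = b then X a j x else 0) + (if k = -b then X (-a) j x else 0)))
      - sc (psign k) (sc (supersign a b k j) ((if a = j then F i k (X k b x) else 0)
          + (if -a = j then F i k (X k (-b) x) else 0)))"
    unfolding D_def using idx by (simp add: F_scale inner F_add F_diff F_zero algebra_simps)
  hence inner_scaled: "sc (supersign a b i k) (F i k (F a b D)) = sc \<sigma> (F i k (sc (psign k) (X k j (F a b x))))
      + sc (supersign a b i k) (F i k (sc (psign k) ((if k = b then X a j x else 0) + (if k = -b then X (-a) j x else 0))))
      - sc \<sigma> ((if a = j then F i k (sc (psign k) (X k b x)) else 0)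
          + (if -a = j then F i k (sc (psign k) (X k (-b) x)) else 0))"
    using idx sign
    by (simp only: scale_right_distrib scale_right_diff_distrib scale_scale F_scale scale_if_zero mult.commute[of "psign k"])
  show ?thesis unfolding outer inner_scaled \<sigma>_def
    by (simp add: algebra_simps scale_right_distrib split del: if_split)
qed

lemma F_mult_commutator_delta_sums:
  fixes X :: "int \<Rightarrow> int \<Rightarrow> 'v \<Rightarrow> 'v" and j :: int and x :: 'v
  assumes idx: "a \<in> idx N" "b \<in> idx N" "i \<in> idx N"
  defines "D \<equiv> \<lambda>k. sc (psign k) (X k j x)"
  shows "(\<Sum>k\<in>idx N. (if i = b then F a k (D k) else 0))
     - (\<Sum>k\<in>idx N. sc (supersign a b i k) (if a = k then F i b (D k) else 0))
     + (\<Sum>k\<in>idx N. (if i = -b then F (-a) k (D k) else 0))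
     - (\<Sum>k\<in>idx N. sc (supersign a b i k) (if -a = k then F i (-b) (D k) else 0))
     + (\<Sum>k\<in>idx N. sc (supersign a b i k) (F i k (sc (psign k)
          ((if k = b then X a j x else 0) + (if k = -b then X (-a) j x else 0)))))
   = (if i = b then F_mult X a j x else 0) + (if i = -b then F_mult X (-a) j x else 0)"
proof -
  have ab: "-a \<in> idx N" "-b \<in> idx N" "a \<noteq> 0" "b \<noteq> 0"
    using idx by (auto simp: minus_in_idx idx_iff)
  have "(\<Sum>k\<in>idx N. sc (supersign a b i k) (if a = k then F i b (D k) else 0))
      = sc (supersign a b i b) (F i b (sc (psign b) (X a j x)))"
    using idx supersign_mult_psign[of a b i] unfolding D_def
    by (simp add: scale_if_zero sum.delta F_scale mult.commute)
  moreover have "(\<Sum>k\<in>idx N. sc (supersign a b i k) (if -a = k then F i (-b) (D k) else 0))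
      = sc (supersign a b i (-b)) (F i (-b) (sc (psign (-b)) (X (-a) j x)))"
    using idx ab supersign_minus_mult_psign[of a b i] unfolding D_def
    by (simp add: scale_if_zero sum.delta F_scale mult.commute)
  moreover have "(\<Sum>k\<in>idx N. sc (supersign a b i k) (F i k (sc (psign k)
          ((if k = b then X a j x else 0) + (if k = -b then X (-a) j x else 0)))))
       = (\<Sum>k\<in>idx N. (if k = b then sc (supersign a b i b) (F i b (sc (psign b) (X a j x))) else 0))
        + (\<Sum>k\<in>idx N. (if k = -b then sc (supersign a b i (-b)) (F i (-b) (sc (psign (-b)) (X (-a) j x))) else 0))"
    unfolding sum.distrib[symmetric]
    by (rule sum.cong) (use ab idx in \<open>auto simp: F_add F_zero F_scale\<close>)
  ultimately show ?thesis
    using ab idx unfolding F_mult_def D_def by (simp add: sum.delta)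
qed

lemma ad_equivariant_F_mult:
  assumes X: "ad_equivariant X"
  shows "ad_equivariant (F_mult X)"
  unfolding ad_equivariant_def
proof (intro ballI allI)
  fix a b i j x assume idx: "a \<in> idx N" "b \<in> idx N" "i \<in> idx N" "j \<in> idx N"
  define \<sigma> where "\<sigma> = supersign a b i j"
  define D where "D k = sc (psign k) (X k j x)" for k
  have "F a b (F_mult X i j x) - sc \<sigma> (F_mult X i j (F a b x)) =
     (\<Sum>k\<in>idx N. F a b (F i k (D k)) - sc \<sigma> (F i k (sc (psign k) (X k j (F a b x)))))"
    unfolding F_mult_def D_def using idx by (simp add: F_sum scale_sum_right sum_subtractf)
  also have "\<dots> = (\<Sum>k\<in>idx N. (if i = b then F a k (D k) else 0))
     - (\<Sum>k\<in>idx N. sc (supersign a b i k) (if a = k then F i b (D k) else 0))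
     + (\<Sum>k\<in>idx N. (if i = -b then F (-a) k (D k) else 0))
     - (\<Sum>k\<in>idx N. sc (supersign a b i k) (if -a = k then F i (-b) (D k) else 0))
     + (\<Sum>k\<in>idx N. sc (supersign a b i k) (F i k (sc (psign k)
          ((if k = b then X a j x else 0) + (if k = -b then X (-a) j x else 0)))))
     - (\<Sum>k\<in>idx N. sc \<sigma> (if a = j then F i k (sc (psign k) (X k b x)) else 0))
     - (\<Sum>k\<in>idx N. sc \<sigma> (if -a = j then F i k (sc (psign k) (X k (-b) x)) else 0))"
    using F_mult_summand_commutator[OF X idx] unfolding D_def \<sigma>_def
    by (simp add: sum.distrib sum_subtractf)
  also have "\<dots> = (if i = b then F_mult X a j x else 0) + (if i = -b then F_mult X (-a) j x else 0)
     - sc \<sigma> (if a = j then F_mult X i b x else 0) - sc \<sigma> (if -a = j then F_mult X i (-b) x else 0)"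
    unfolding F_mult_commutator_delta_sums[OF idx(1-3), where X = X and j = j and x = x, folded D_def]
    by (simp add: F_mult_def scale_sum_right)
  finally show "F a b (F_mult X i j x) - sc (supersign a b i j) (F_mult X i j (F a b x)) =
      (if i = b then F_mult X a j x else 0) - sc (supersign a b i j) (if a = j then F_mult X i b x else 0)
      + (if i = -b then F_mult X (-a) j x else 0) - sc (supersign a b i j) (if -a = j then F_mult X i (-b) x else 0)"
    unfolding \<sigma>_def by (simp add: algebra_simps)
qed

lemma ad_equivariant_Cop: "ad_equivariant (C (Suc n))"
proof (induction n)
  case 0
  have "C (Suc 0) = F" by (simp add: fun_eq_iff)
  thus ?case by (simp add: ad_equivariant_F)
next
  case (Suc n)
  thus ?case unfolding Cop_Suc_Suc by (rule ad_equivariant_F_mult)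
qed

lemma Cop_commutator:
  assumes "a \<in> idx N" "b \<in> idx N" "i \<in> idx N" "j \<in> idx N"
  shows "F a b (C (Suc n) i j x) - sc (supersign a b i j) (C (Suc n) i j (F a b x)) =
      (if i = b then C (Suc n) a j x else 0) - sc (supersign a b i j) (if a = j then C (Suc n) i b x else 0)
      + (if i = -b then C (Suc n) (-a) j x else 0) - sc (supersign a b i j) (if -a = j then C (Suc n) i (-b) x else 0)"
  using ad_equivariant_Cop[of n] assms unfolding ad_equivariant_def by blast

lemma Cop_zero: "i \<in> idx N \<Longrightarrow> j \<in> idx N \<Longrightarrow> C n i j 0 = 0"
proof (induction n arbitrary: i j)
  case (Suc n)
  thus ?case by (cases n) (simp_all add: F_zero)
qed simp

lemma sum_psign_abs_greater:
  assumes "p \<ge> 0"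
  shows "(\<Sum>k\<in>{k\<in>idx N. p < \<bar>k\<bar>}. sc (psign k) (g \<bar>k\<bar>)) = 0"
  unfolding sum_idx_abs_greater[OF assms]
proof (rule sum.neutral, rule ballI)
  fix q assume "q \<in> {p<..int N}"
  hence "q > 0" using assms by simp
  thus "sc (psign q) (g \<bar>q\<bar>) + sc (psign (-q)) (g \<bar>-q\<bar>) = 0"
    by (simp add: par_def)
qed

end

fun casimir_beta :: "nat \<Rightarrow> (int \<Rightarrow> complex) \<Rightarrow> nat \<Rightarrow> int \<Rightarrow> complex" where
  "casimir_beta N lam 0 p = 1"
| "casimir_beta N lam (Suc m) p =
     lam p * (lam p - 1) * casimir_beta N lam m p - 2 * (\<Sum>q\<in>{p<..int N}. lam q * casimir_beta N lam m q)"

locale qrep_highest_weight = qrep sc N F for sc :: "complex \<Rightarrow> 'v::ab_group_add \<Rightarrow> 'v" and N F +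
  fixes v :: 'v and lam :: "int \<Rightarrow> complex"
  assumes F_raising_v: "i \<in> idx N \<Longrightarrow> j \<in> idx N \<Longrightarrow> \<bar>i\<bar> < \<bar>j\<bar> \<Longrightarrow> F i j v = 0"
    and F_diag_pos_v: "i \<in> {1..int N} \<Longrightarrow> F i i v = sc (lam i) v"
begin

lemma F_diag_v: "i \<in> idx N \<Longrightarrow> F i i v = sc (lam \<bar>i\<bar>) v"
proof (cases "i > 0")
  case False
  moreover assume "i \<in> idx N"
  moreover have "F i i = F (-i) (-i)" using F_minus_minus[of "-i" "-i"] \<open>i \<in> idx N\<close> minus_in_idx by simp
  ultimately show ?thesis using F_diag_pos_v[of "-i"] by (auto simp: idx_iff)
qed (use F_diag_pos_v in \<open>auto simp: idx_iff\<close>)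

lemma Cop_raising_v: "i \<in> idx N \<Longrightarrow> j \<in> idx N \<Longrightarrow> \<bar>i\<bar> < \<bar>j\<bar> \<Longrightarrow> C (Suc n) i j v = 0"
proof (induction n arbitrary: i j)
  case 0 thus ?case using F_raising_v by simp
next
  case (Suc n)
  have "F i k (sc (psign k) (C (Suc n) k j v)) = 0" if k: "k \<in> idx N" for k
  proof (cases "\<bar>k\<bar> < \<bar>j\<bar>")
    case True thus ?thesis using Suc k by (simp add: F_zero)
  next
    case False
    hence "\<bar>i\<bar> < \<bar>k\<bar>" using Suc.prems by simp
    moreover have "i \<noteq> j" "-i \<noteq> j" "k \<noteq> -k" using Suc.prems k by (auto simp: idx_iff)
    ultimately have "F i k (C (Suc n) k j v) = 0"
      using Cop_commutator[of i k k j n v] Suc.IH[of i j] Suc.prems F_raising_v[of i k] k Cop_zero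
      by simp
    thus ?thesis using Suc.prems k by (simp add: F_scale)
  qed
  thus ?case by simp
qed

lemma F_Cop_diag_v:
  assumes "i \<in> idx N" "k \<in> idx N" "\<bar>i\<bar> < \<bar>k\<bar>"
  shows "F i k (C (Suc n) k i v) = C (Suc n) i i v - sc (psign i * psign k) (C (Suc n) k k v)"
proof -
  have "k \<noteq> -k" "-i \<noteq> i" using assms by (auto simp: idx_iff)
  thus ?thesis
    using Cop_commutator[of i k k i n v] assms F_raising_v[of i k] Cop_zero supersign_swap[of i k] by simp
qed

lemma F_Cop_odd_v:
  assumes "i \<in> idx N" "k \<in> idx N" "\<bar>i\<bar> < \<bar>k\<bar>"
  shows "F (-i) k (C (Suc n) k i v) = C (Suc n) (-i) i v - C (Suc n) k (-k) v"
proof -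
  have "k \<noteq> -k" "-i \<noteq> i" "i \<noteq> 0" "-i \<in> idx N" using assms by (auto simp: idx_iff)
  thus ?thesis
    using Cop_commutator[of "-i" k k i n v] assms F_raising_v[of "-i" k] Cop_zero
      supersign_minus_swap[of i k]
    by simp
qed

lemma sum_Cop_lower_v:
  assumes "i \<in> idx N" "\<And>k. k \<in> idx N \<Longrightarrow> g k 0 = 0"
  shows "(\<Sum>k\<in>{k\<in>idx N. \<bar>k\<bar> < \<bar>i\<bar>}. g k (C (Suc n) k i v)) = 0"
  by (rule sum.neutral) (use assms Cop_raising_v in auto)

lemma Cop_Suc_diag_v:
  assumes i: "i \<in> idx N"
  shows "C (Suc (Suc n)) i i v = sc (psign i) (F i i (C (Suc n) i i v)
           - F (-i) i (C (Suc n) (-i) i v) - (\<Sum>k\<in>{k\<in>idx N. \<bar>i\<bar> < \<bar>k\<bar>}. C (Suc n) k k v))"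
proof -
  have ni: "-i \<in> idx N" "i \<noteq> 0" using i by (auto simp: idx_iff)
  have "(\<Sum>k\<in>{k\<in>idx N. \<bar>i\<bar> < \<bar>k\<bar>}. F i k (sc (psign k) (C (Suc n) k i v)))
      = (\<Sum>k\<in>{k\<in>idx N. \<bar>i\<bar> < \<bar>k\<bar>}. sc (psign k) (C (Suc n) i i v) - sc (psign i) (C (Suc n) k k v))"
  proof (rule sum.cong)
    fix k assume "k \<in> {k\<in>idx N. \<bar>i\<bar> < \<bar>k\<bar>}"
    hence k: "k \<in> idx N" "\<bar>i\<bar> < \<bar>k\<bar>" by auto
    show "F i k (sc (psign k) (C (Suc n) k i v)) = sc (psign k) (C (Suc n) i i v) - sc (psign i) (C (Suc n) k k v)"
      using F_Cop_diag_v[OF i k] i k by (simp add: F_scale scale_right_diff_distrib par_def)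
  qed simp
  also have "\<dots> = - sc (psign i) (\<Sum>k\<in>{k\<in>idx N. \<bar>i\<bar> < \<bar>k\<bar>}. C (Suc n) k k v)"
    using sum_psign_abs_greater[of "\<bar>i\<bar>" "\<lambda>_. C (Suc n) i i v"]
    by (simp add: sum_subtractf scale_sum_right)
  moreover have "F i (-i) (sc (psign (-i)) (C (Suc n) (-i) i v)) = - sc (psign i) (F (-i) i (C (Suc n) (-i) i v))"
    using i ni by (simp add: F_swap_minus psign_minus F_scale F_minus)
  moreover have "(\<Sum>k\<in>{k\<in>idx N. \<bar>k\<bar> < \<bar>i\<bar>}. F i k (sc (psign k) (C (Suc n) k i v))) = 0"
    by (rule sum_Cop_lower_v) (use i in \<open>simp_all add: F_zero\<close>)
  ultimately show ?thesis
    using sum_idx_split[OF i, of "\<lambda>k. F i k (sc (psign k) (C (Suc n) k i v))"] i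
    by (simp add: F_scale scale_right_diff_distrib)
qed

lemma Cop_Suc_odd_diag_v:
  assumes i: "i \<in> idx N"
  shows "C (Suc (Suc n)) (-i) i v = sc (psign i) (F (-i) i (C (Suc n) i i v) - F i i (C (Suc n) (-i) i v))
           - (\<Sum>k\<in>{k\<in>idx N. \<bar>i\<bar> < \<bar>k\<bar>}. sc (psign k) (C (Suc n) k (-k) v))"
proof -
  have ni: "-i \<in> idx N" "i \<noteq> 0" using i by (auto simp: idx_iff)
  have "(\<Sum>k\<in>{k\<in>idx N. \<bar>i\<bar> < \<bar>k\<bar>}. F (-i) k (sc (psign k) (C (Suc n) k i v)))
      = (\<Sum>k\<in>{k\<in>idx N. \<bar>i\<bar> < \<bar>k\<bar>}. sc (psign k) (C (Suc n) (-i) i v) - sc (psign k) (C (Suc n) k (-k) v))"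
    by (rule sum.cong) (use F_Cop_odd_v i ni in \<open>auto simp: F_scale scale_right_diff_distrib\<close>)
  also have "\<dots> = - (\<Sum>k\<in>{k\<in>idx N. \<bar>i\<bar> < \<bar>k\<bar>}. sc (psign k) (C (Suc n) k (-k) v))"
    using sum_psign_abs_greater[of "\<bar>i\<bar>" "\<lambda>_. C (Suc n) (-i) i v"] by (simp add: sum_subtractf)
  moreover have "F (-i) (-i) (sc (psign (-i)) (C (Suc n) (-i) i v)) = - sc (psign i) (F i i (C (Suc n) (-i) i v))"
    using i ni F_minus_minus[of i i] by (simp add: psign_minus F_scale F_minus)
  moreover have "(\<Sum>k\<in>{k\<in>idx N. \<bar>k\<bar> < \<bar>i\<bar>}. F (-i) k (sc (psign k) (C (Suc n) k i v))) = 0"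
    by (rule sum_Cop_lower_v) (use i ni in \<open>simp_all add: F_zero\<close>)
  ultimately show ?thesis
    using sum_idx_split[OF i, of "\<lambda>k. F (-i) k (sc (psign k) (C (Suc n) k i v))"] i ni
    by (simp add: F_scale scale_right_diff_distrib)
qed

abbreviation \<beta> where "\<beta> \<equiv> casimir_beta N lam"

lemma Cop_even_v_if_odd:
  assumes odd: "\<And>j. j \<in> idx N \<Longrightarrow> C (Suc (2*m)) j j v = sc (lam \<bar>j\<bar> * \<beta> m \<bar>j\<bar>) v \<and>
                  C (Suc (2*m)) (-j) j v = sc (\<beta> m \<bar>j\<bar>) (F (-j) j v)"
    and i: "i \<in> idx N"
  shows "C (Suc (Suc (2*m))) i i v = sc (psign i * \<beta> (Suc m) \<bar>i\<bar>) v \<and>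
         C (Suc (Suc (2*m))) (-i) i v = 0"
proof -
  define p where "p = \<bar>i\<bar>"
  have ni: "-i \<in> idx N" "p \<ge> 0" using i by (auto simp: minus_in_idx p_def)
  have diag: "C (Suc (2*m)) i i v = sc (lam p * \<beta> m p) v"
    and odd_diag: "C (Suc (2*m)) (-i) i v = sc (\<beta> m p) (F (-i) i v)"
    using odd[OF i] by (simp_all add: p_def)
  have "(\<Sum>k\<in>{k\<in>idx N. \<bar>i\<bar> < \<bar>k\<bar>}. C (Suc (2*m)) k k v)
      = sc (\<Sum>k\<in>{k\<in>idx N. p < \<bar>k\<bar>}. lam \<bar>k\<bar> * \<beta> m \<bar>k\<bar>) v"
    using odd by (simp add: scale_sum_left p_def)
  also have "(\<Sum>k\<in>{k\<in>idx N. p < \<bar>k\<bar>}. lam \<bar>k\<bar> * \<beta> m \<bar>k\<bar>) = 2 * (\<Sum>q\<in>{p<..int N}. lam q * \<beta> m q)"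
    unfolding sum_idx_abs_greater[OF ni(2)] using ni(2) by (auto simp: sum_distrib_left intro!: sum.cong)
  finally have "C (Suc (Suc (2*m))) i i v
      = sc (psign i) (sc (lam p * \<beta> m p * lam p - \<beta> m p * lam p - 2 * (\<Sum>q\<in>{p<..int N}. lam q * \<beta> m q)) v)"
    using Cop_Suc_diag_v[OF i, of "2*m"] diag odd_diag i ni F_diag_v[OF i]
    by (simp add: F_scale F_odd_diag_square p_def scale_left_diff_distrib)
  moreover have "C (Suc (Suc (2*m))) (-i) i v = 0"
  proof -
    have "F i i (F (-i) i v) = sc (lam p) (F (-i) i v)"
      using F_diag_commute_odd_diag[OF i] F_diag_v[OF i] i ni by (simp add: F_scale p_def)
    hence "F (-i) i (C (Suc (2*m)) i i v) - F i i (C (Suc (2*m)) (-i) i v) = 0"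
      using diag odd_diag i ni by (simp add: F_scale mult.commute)
    moreover have "C (Suc (2*m)) k (-k) v = sc (\<beta> m \<bar>k\<bar>) (F (-\<bar>k\<bar>) \<bar>k\<bar> v)" if k: "k \<in> idx N" for k
    proof -
      have "F k (-k) = F (-\<bar>k\<bar>) \<bar>k\<bar>" using F_swap_minus[OF k] by (cases "k > 0") auto
      thus ?thesis using odd[OF minus_in_idx[OF k]] by simp
    qed
    ultimately show ?thesis
      using Cop_Suc_odd_diag_v[OF i, of "2*m"] sum_psign_abs_greater[of "\<bar>i\<bar>" "\<lambda>q. sc (\<beta> m q) (F (-q) q v)"]
      by simp
  qed
  ultimately show ?thesis by (simp add: p_def algebra_simps)
qed

lemma Cop_odd_v_if_even:
  assumes even: "\<And>j. j \<in> idx N \<Longrightarrow> C (Suc (Suc (2*m))) j j v = sc (psign j * \<beta> (Suc m) \<bar>j\<bar>) v \<and>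
                  C (Suc (Suc (2*m))) (-j) j v = 0"
    and i: "i \<in> idx N"
  shows "C (Suc (2 * Suc m)) i i v = sc (lam \<bar>i\<bar> * \<beta> (Suc m) \<bar>i\<bar>) v \<and>
         C (Suc (2 * Suc m)) (-i) i v = sc (\<beta> (Suc m) \<bar>i\<bar>) (F (-i) i v)"
proof -
  have ni: "-i \<in> idx N" using i by (rule minus_in_idx)
  have "(\<Sum>k\<in>{k\<in>idx N. \<bar>i\<bar> < \<bar>k\<bar>}. C (Suc (Suc (2*m))) k k v)
      = (\<Sum>k\<in>{k\<in>idx N. \<bar>i\<bar> < \<bar>k\<bar>}. sc (psign k) (sc (\<beta> (Suc m) \<bar>k\<bar>) v))"
    using even by simp
  also have "\<dots> = 0" by (rule sum_psign_abs_greater) simp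
  finally have diag: "C (Suc (2 * Suc m)) i i v = sc (\<beta> (Suc m) \<bar>i\<bar> * lam \<bar>i\<bar>) v"
    using Cop_Suc_diag_v[OF i, of "Suc (2*m)"] even[OF i] i ni F_diag_v[OF i]
    by (simp add: F_scale F_zero mult.assoc psign_mult_self del: Cop.simps casimir_beta.simps)
  have "C (Suc (Suc (2*m))) k (-k) v = 0" if "k \<in> idx N" for k
    using even[OF minus_in_idx[OF that]] by simp
  hence "C (Suc (2 * Suc m)) (-i) i v = sc (\<beta> (Suc m) \<bar>i\<bar>) (F (-i) i v)"
    using Cop_Suc_odd_diag_v[OF i, of "Suc (2*m)"] even i ni
    by (simp add: F_scale F_zero psign_mult_self del: Cop.simps casimir_beta.simps)
  with diag show ?thesis by (simp add: mult.commute del: Cop.simps casimir_beta.simps)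
qed

lemma Cop_odd_v:
  "i \<in> idx N \<Longrightarrow> C (Suc (2*m)) i i v = sc (lam \<bar>i\<bar> * \<beta> m \<bar>i\<bar>) v \<and>
     C (Suc (2*m)) (-i) i v = sc (\<beta> m \<bar>i\<bar>) (F (-i) i v)"
proof (induction m arbitrary: i)
  case 0 thus ?case using F_diag_v by simp
next
  case (Suc m)
  thus ?case using Cop_odd_v_if_even Cop_even_v_if_odd by blast
qed

lemma casimir_odd_v: "casimir N sc F (2*m + 1) v = sc (\<Sum>i\<in>idx N. lam \<bar>i\<bar> * \<beta> m \<bar>i\<bar>) v"
  using Cop_odd_v by (simp add: casimir_def scale_sum_left)

end

unbundle fps_syntax

lemma casimir_beta_fps_recurrence:
  fixes N :: nat and lam :: "int \<Rightarrow> complex"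
  defines "G \<equiv> \<lambda>q. Abs_fps (\<lambda>m. casimir_beta N lam m q)"
  shows "G q * (1 - fps_const (lam q * (lam q - 1)) * fps_X) =
         1 - fps_const 2 * fps_X * (\<Sum>r\<in>{q<..int N}. fps_const (lam r) * G r)"
proof (rule fps_ext)
  fix n
  show "(G q * (1 - fps_const (lam q * (lam q - 1)) * fps_X)) $ n =
        (1 - fps_const 2 * fps_X * (\<Sum>r\<in>{q<..int N}. fps_const (lam r) * G r)) $ n"
  proof (cases n)
    case (Suc k)
    have "(G q * (1 - fps_const (lam q * (lam q - 1)) * fps_X)) $ n
        = casimir_beta N lam n q - lam q * (lam q - 1) * casimir_beta N lam k q"
      using Suc by (simp add: G_def right_diff_distrib mult.assoc[symmetric]) (simp add: algebra_simps)
    moreover have "(1 - fps_const 2 * fps_X * (\<Sum>r\<in>{q<..int N}. fps_const (lam r) * G r)) $ n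
        = - 2 * (\<Sum>r\<in>{q<..int N}. lam r * casimir_beta N lam k r)"
      using Suc by (simp add: G_def fps_sum_nth mult.assoc fps_X_mult_nth sum_distrib_left sum_negf)
    ultimately show ?thesis using Suc by (simp add: algebra_simps)
  qed (simp add: G_def)
qed

lemma casimir_beta_fps_prod:
  fixes N :: nat and lam :: "int \<Rightarrow> complex"
  defines "G \<equiv> \<lambda>q. Abs_fps (\<lambda>m. casimir_beta N lam m q)"
  assumes "p \<le> int N"
  shows "1 - fps_const 2 * fps_X * (\<Sum>r\<in>{p<..int N}. fps_const (lam r) * G r) =
     (\<Prod>r\<in>{p<..int N}. (1 - fps_const (lam r * (lam r + 1)) * fps_X) / (1 - fps_const (lam r * (lam r - 1)) * fps_X))"
  using assms(2)
proof (induction p rule: int_le_induct)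
  case (step i)
  define A where "A = (1 - fps_const (lam i * (lam i + 1)) * fps_X :: complex fps)"
  define B where "B = (1 - fps_const (lam i * (lam i - 1)) * fps_X :: complex fps)"
  define R where "R = 1 - fps_const 2 * fps_X * (\<Sum>r\<in>{i<..int N}. fps_const (lam r) * G r)"
  have interval: "{i - 1<..int N} = insert i {i<..int N}" using step by auto
  have B_unit: "B * inverse B = 1" by (simp add: B_def inverse_mult_eq_1')
  have "G i * B = R" unfolding B_def R_def G_def by (rule casimir_beta_fps_recurrence)
  hence G_i: "G i = R * inverse B"
    by (metis B_unit mult.assoc mult.right_neutral)
  have A_B: "A = B - fps_const 2 * fps_X * fps_const (lam i)"
  proof -
    have "fps_const (lam i * (lam i + 1)) = fps_const (lam i * (lam i - 1)) + fps_const 2 * fps_const (lam i)"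
      by (simp add: algebra_simps)
    thus ?thesis unfolding A_def B_def by (simp add: algebra_simps del: fps_const_add fps_const_mult)
  qed
  have "1 - fps_const 2 * fps_X * (\<Sum>r\<in>{i - 1<..int N}. fps_const (lam r) * G r)
      = R - fps_const 2 * fps_X * fps_const (lam i) * G i"
    unfolding interval R_def by (simp add: algebra_simps)
  also have "\<dots> = R * (B * inverse B) - fps_const 2 * fps_X * fps_const (lam i) * (R * inverse B)"
    using G_i B_unit by simp
  also have "\<dots> = (R * inverse B) * A"
    unfolding A_B by (simp add: algebra_simps)
  also have "\<dots> = A / B * R"
    by (simp add: B_def fps_divide_unit mult.commute)
  finally show ?case unfolding interval step.IH[folded R_def] A_def B_def by simp
qed simp

lemma casimir_gamma_fps:
  fixes N :: nat and lam :: "int \<Rightarrow> complex"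
  shows "Abs_fps (\<lambda>m. \<Sum>i\<in>idx N. lam \<bar>i\<bar> * casimir_beta N lam m \<bar>i\<bar>) =
    (1 - (\<Prod>i\<in>{1 .. int N}. (1 - fps_const (lam i * (lam i + 1)) * fps_X) /
                              (1 - fps_const (lam i * (lam i - 1)) * fps_X))) / fps_X"
proof -
  define G where "G = (\<lambda>q. Abs_fps (\<lambda>m. casimir_beta N lam m q))"
  have "(\<Sum>i\<in>idx N. lam \<bar>i\<bar> * casimir_beta N lam m \<bar>i\<bar>)
      = 2 * (\<Sum>q\<in>{0<..int N}. lam q * casimir_beta N lam m q)" for m
  proof -
    have "idx N = {k \<in> idx N. 0 < \<bar>k\<bar>}" by (auto simp: idx_iff)
    thus ?thesis
      using sum_idx_abs_greater[where p = 0 and N = N and f = "\<lambda>i. lam \<bar>i\<bar> * casimir_beta N lam m \<bar>i\<bar>"]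
      by (simp add: sum_distrib_left)
  qed
  hence "Abs_fps (\<lambda>m. \<Sum>i\<in>idx N. lam \<bar>i\<bar> * casimir_beta N lam m \<bar>i\<bar>)
      = fps_const 2 * (\<Sum>r\<in>{0<..int N}. fps_const (lam r) * G r)"
    by (intro fps_ext) (simp add: G_def fps_sum_nth)
  also have "\<dots> = (1 - (1 - fps_const 2 * fps_X * (\<Sum>r\<in>{0<..int N}. fps_const (lam r) * G r))) / fps_X"
    by (simp add: nonzero_mult_div_cancel_left mult.assoc del: fps_divide_X)
  also have "1 - fps_const 2 * fps_X * (\<Sum>r\<in>{0<..int N}. fps_const (lam r) * G r) =
      (\<Prod>r\<in>{0<..int N}. (1 - fps_const (lam r * (lam r + 1)) * fps_X) /
                          (1 - fps_const (lam r * (lam r - 1)) * fps_X))"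
    unfolding G_def by (rule casimir_beta_fps_prod) simp
  also have "{0<..int N} = {1..int N}" by auto
  finally show ?thesis .
qed

theorem mainTheorem12:
  fixes N :: nat and sc :: "complex \<Rightarrow> 'v::ab_group_add \<Rightarrow> 'v"
    and F :: "int \<Rightarrow> int \<Rightarrow> 'v \<Rightarrow> 'v" and v :: 'v and lam :: "int \<Rightarrow> complex"
  assumes "N \<ge> 1"
    and "is_qrep N sc F"
    and "\<And>i j. i \<in> idx N \<Longrightarrow> j \<in> idx N \<Longrightarrow> \<bar>i\<bar> < \<bar>j\<bar> \<Longrightarrow> F i j v = 0"
    and "\<And>i. i \<in> {1 .. int N} \<Longrightarrow> F i i v = sc (lam i) v"
  shows "\<exists>\<gamma> :: nat \<Rightarrow> complex.
           (\<forall>m. casimir N sc F (2 * m + 1) v = sc (\<gamma> m) v) \<and>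
           Abs_fps \<gamma> =
             (1 - (\<Prod>i\<in>{1 .. int N}.
                     (1 - fps_const (lam i * (lam i + 1)) * fps_X) /
                     (1 - fps_const (lam i * (lam i - 1)) * fps_X))) / fps_X"
proof -
  interpret qrep sc N F
    using assms(2) by (rule qrep_if_is_qrep)
  interpret qrep_highest_weight sc N F v lam
    by unfold_locales (use assms(3,4) in auto)
  show ?thesis
    by (intro exI[of _ "\<lambda>m. \<Sum>i\<in>idx N. lam \<bar>i\<bar> * \<beta> m \<bar>i\<bar>"] conjI allI
        casimir_odd_v casimir_gamma_fps)
qed

end
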